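(* Let $\mathcal V$ be a complex topological vector space and $\mathcal D\subseteq\mathcal V_{\rm nc}$ a noncommutative set satisfying (P1) each $\mathcal D_n$ is open in $\mathcal V^{n\times n}$, (P2) $UaU^*\in\mathcal D_n$ for $a\in\mathcal D_n$ and unitary $U\in\mathbb C^{n\times n}$, and (P3) if $\begin{bmatrix}a&0\\0&c\end{bmatrix}\in\mathcal D_{n+m}$ then $a\in\mathcal D_n,c\in\mathcal D_m$. If $n\in\mathbb N$ and $A\subseteq\mathcal D_n$ is open in the topology generated by the pseudodistance $\tilde d_{\mathcal D}$, then $A$ is open in the product topology induced by $\mathcal V$ on $\mathcal V^{n\times n}$.
   Context: A noncommutative set is a family $\mathcal D=(\mathcal D_n)$, $\mathcal D_n\subseteq\mathcal V^{n\times n}$, closed under direct sums. For $a\in\mathcal D_n,c\in\mathcal D_m,b\in\mathcal V^{n\times m}$, $\delta_{\mathcal D}(a,c)(b)=\big[\sup\{t\in[0,+\infty]\colon\begin{bmatrix}a&sb\\0&c\end{bmatrix}\in\mathcal D_{n+m}\ \forall s\in[0,t]\}\big]^{-1}$ ($1/0=+\infty,1/\infty=0$), $\tilde\delta_{\mathcal D}(a,c)=\delta_{\mathcal D}(a,c)(a-c)$ for $a,c\in\mathcal D_n$, and $\tilde d_{\mathcal D}(a,c)=\inf\{\sum_{j=1}^N\tilde\delta_{\mathcal D}(a_{j-1},a_j)\colon N\in\mathbb N,\ a_0=a,a_N=c,\ a_j\in\mathcal D_n\}$. *)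

theory Defs
  imports "HOL-Analysis.Analysis" "HOL-Library.Extended_Nonnegative_Real"
begin

text \<open>Square/rectangular matrices over V are represented as functions nat => nat => 'v,
  with entries outside the index range equal to zero.  The complex vector space
  structure of V is given by a scalar multiplication 'scl'.\<close>

type_synonym 'v ncmat = "nat \<Rightarrow> nat \<Rightarrow> 'v"

definition mat_carrier :: "nat \<Rightarrow> nat \<Rightarrow> ('v::zero) ncmat set" where
  "mat_carrier n m = {M. \<forall>i j. \<not> (i < n \<and> j < m) \<longrightarrow> M i j = 0}"

text \<open>Block upper triangular matrix [[a, b],[0, c]] with a of size n, c of size m.\<close>
definition block_ut :: "nat \<Rightarrow> nat \<Rightarrow> ('v::zero) ncmat \<Rightarrow> 'v ncmat \<Rightarrow> 'v ncmat \<Rightarrow> 'v ncmat" where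
  "block_ut n m a b c = (\<lambda>i j.
     if i < n \<and> j < n then a i j
     else if i < n \<and> n \<le> j \<and> j < n + m then b i (j - n)
     else if n \<le> i \<and> i < n + m \<and> n \<le> j \<and> j < n + m then c (i - n) (j - n)
     else 0)"

definition nc_dsum :: "nat \<Rightarrow> nat \<Rightarrow> ('v::zero) ncmat \<Rightarrow> 'v ncmat \<Rightarrow> 'v ncmat" where
  "nc_dsum n m a c = block_ut n m a (\<lambda>_ _. 0) c"

definition nc_set :: "(nat \<Rightarrow> ('v::zero) ncmat set) \<Rightarrow> bool" where
  "nc_set D \<longleftrightarrow> (\<forall>n. D n \<subseteq> mat_carrier n n) \<and>
     (\<forall>n m a c. a \<in> D n \<longrightarrow> c \<in> D m \<longrightarrow> nc_dsum n m a c \<in> D (n + m))"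

definition mat_open :: "nat \<Rightarrow> ('v::{zero,topological_space}) ncmat set \<Rightarrow> bool" where
  "mat_open n S \<longleftrightarrow> S \<subseteq> mat_carrier n n \<and>
     (\<forall>M\<in>S. \<exists>W :: nat \<Rightarrow> nat \<Rightarrow> 'v set.
        (\<forall>i<n. \<forall>j<n. open (W i j) \<and> M i j \<in> W i j) \<and>
        (\<forall>N\<in>mat_carrier n n. (\<forall>i<n. \<forall>j<n. N i j \<in> W i j) \<longrightarrow> N \<in> S))"

definition unitary_mat :: "nat \<Rightarrow> (nat \<Rightarrow> nat \<Rightarrow> complex) \<Rightarrow> bool" where
  "unitary_mat n U \<longleftrightarrow> (\<forall>i<n. \<forall>j<n.
      (\<Sum>k<n. U i k * cnj (U j k)) = (if i = j then 1 else 0))"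

definition unitary_conj :: "(complex \<Rightarrow> 'v \<Rightarrow> 'v) \<Rightarrow> nat \<Rightarrow> (nat \<Rightarrow> nat \<Rightarrow> complex)
     \<Rightarrow> ('v::comm_monoid_add) ncmat \<Rightarrow> 'v ncmat" where
  "unitary_conj scl n U a = (\<lambda>i j. if i < n \<and> j < n then
      (\<Sum>k<n. \<Sum>l<n. scl (U i k * cnj (U j l)) (a k l)) else 0)"

text \<open>delta_D(a,c)(b) = [sup {t in [0,inf] : [[a, s b],[0, c]] in D_{n+m} for all s in [0,t]}]^{-1},
  with 1/0 = inf, 1/inf = 0 (ennreal inverse has exactly these conventions).\<close>
definition nc_delta :: "(complex \<Rightarrow> 'v \<Rightarrow> 'v) \<Rightarrow> (nat \<Rightarrow> ('v::zero) ncmat set)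
     \<Rightarrow> nat \<Rightarrow> nat \<Rightarrow> 'v ncmat \<Rightarrow> 'v ncmat \<Rightarrow> 'v ncmat \<Rightarrow> ennreal" where
  "nc_delta scl D n m a c b = inverse (Sup {t :: ennreal.
      \<forall>s::real. 0 \<le> s \<longrightarrow> ennreal s \<le> t \<longrightarrow>
        block_ut n m a (\<lambda>i j. scl (complex_of_real s) (b i j)) c \<in> D (n + m)})"

definition nc_delta_tilde :: "(complex \<Rightarrow> 'v \<Rightarrow> 'v) \<Rightarrow> (nat \<Rightarrow> ('v::ab_group_add) ncmat set)
     \<Rightarrow> nat \<Rightarrow> 'v ncmat \<Rightarrow> 'v ncmat \<Rightarrow> ennreal" where
  "nc_delta_tilde scl D n a c = nc_delta scl D n n a c (\<lambda>i j. a i j - c i j)"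

definition nc_dist_tilde :: "(complex \<Rightarrow> 'v \<Rightarrow> 'v) \<Rightarrow> (nat \<Rightarrow> ('v::ab_group_add) ncmat set)
     \<Rightarrow> nat \<Rightarrow> 'v ncmat \<Rightarrow> 'v ncmat \<Rightarrow> ennreal" where
  "nc_dist_tilde scl D n a c = Inf {(\<Sum>j\<in>{1..N}. nc_delta_tilde scl D n (x (j - 1)) (x j)) | N (x :: nat \<Rightarrow> 'v ncmat).
      N \<ge> 1 \<and> x 0 = a \<and> x N = c \<and> (\<forall>j\<le>N. x j \<in> D n)}"

definition dtilde_open :: "(complex \<Rightarrow> 'v \<Rightarrow> 'v) \<Rightarrow> (nat \<Rightarrow> ('v::ab_group_add) ncmat set)
     \<Rightarrow> nat \<Rightarrow> 'v ncmat set \<Rightarrow> bool" where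
  "dtilde_open scl D n A \<longleftrightarrow> A \<subseteq> D n \<and>
     (\<forall>a\<in>A. \<exists>\<epsilon>>0. {c \<in> D n. nc_dist_tilde scl D n a c < \<epsilon>} \<subseteq> A)"

end

theory Submission
  imports Defs
begin

text \<open>Fix M in an open set A of the pseudodistance topology and a radius \<open>\<epsilon>\<close>, and choose
  T with 1/T < \<open>\<epsilon>\<close>.  Since \<open>M \<oplus> M\<close> lies in the open set \<open>D\<^sub>2\<^sub>n\<close>, continuity of the vector
  space operations provides a product neighbourhood of M such that for every N in it the
  whole segment of block matrices [[M, s(M - N)], [0, N]], 0 \<le> s \<le> T, stays in \<open>D\<^sub>2\<^sub>n\<close>.
  Then N lies in \<open>D\<^sub>n\<close> by (P3) and the one-step chain from M to N has length
  \<open>\<delta>\<close>(M, N)(M - N) \<le> 1/T < \<open>\<epsilon>\<close>, so N lies in A.\<close>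

lemma continuous_on_partial_application:
  assumes "continuous_on UNIV (\<lambda>(x::'a::topological_space, y::'b::topological_space). f x y)"
  shows "continuous_on UNIV (f a)"
proof -
  have "continuous_on UNIV ((\<lambda>(x, y). f x y) \<circ> Pair a)"
    by (intro continuous_on_compose continuous_on_Pair continuous_intros
        continuous_on_subset[OF assms]) simp
  then show ?thesis by (simp add: o_def)
qed

lemma open_vimage_diff_left:
  fixes scl :: "complex \<Rightarrow> 'v::{ab_group_add, topological_space} \<Rightarrow> 'v" and a :: 'v
  assumes vs: "vector_space scl"
    and add_cont: "continuous_on UNIV (\<lambda>(x::'v, y::'v). x + y)"
    and scl_cont: "continuous_on UNIV (\<lambda>(c::complex, x::'v). scl c x)"
    and "open U"
  shows "open {x. a - x \<in> U}"
proof -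
  interpret module scl using vs by (simp add: module_iff_vector_space)
  have "continuous_on UNIV ((+) a \<circ> scl (-1))"
    by (rule continuous_on_compose[OF continuous_on_partial_application[OF scl_cont]
          continuous_on_subset[OF continuous_on_partial_application[OF add_cont]]]) simp
  moreover have "(+) a \<circ> scl (-1) = (\<lambda>x. a - x)"
    using scale_minus_left[of 1] by (simp add: fun_eq_iff)
  ultimately have "continuous_on UNIV (\<lambda>x. a - x)" by simp
  then show ?thesis
    using continuous_on_open_vimage[of UNIV "\<lambda>x. a - x"] \<open>open U\<close> by (simp add: vimage_def)
qed

text \<open>Joint continuity of the scalar multiplication at (0, 0) gives a box \<open>B \<times> C\<close>; rescaling
  C by a large factor K turns the scalars in B into the whole interval [0, T].\<close>

lemma uniformly_small_scalings:
  fixes scl :: "complex \<Rightarrow> 'v::{ab_group_add, topological_space} \<Rightarrow> 'v"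
  assumes vs: "vector_space scl"
    and scl_cont: "continuous_on UNIV (\<lambda>(c::complex, x::'v). scl c x)"
    and "open W" "0 \<in> W" "0 \<le> T"
  shows "\<exists>U. open U \<and> 0 \<in> U \<and> (\<forall>x\<in>U. \<forall>s. 0 \<le> s \<longrightarrow> s \<le> T \<longrightarrow> scl (of_real s) x \<in> W)"
proof -
  interpret module scl using vs by (simp add: module_iff_vector_space)
  let ?f = "\<lambda>(c::complex, x::'v). scl c x"
  have "open (?f -` W)"
    using continuous_on_open_vimage[of UNIV ?f] scl_cont \<open>open W\<close> by simp
  moreover have "(0, 0) \<in> ?f -` W" using \<open>0 \<in> W\<close> by simp
  ultimately obtain B C where BC: "open B" "open C" "(0, 0) \<in> B \<times> C" "B \<times> C \<subseteq> ?f -` W"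
    by (rule open_prod_elim)
  obtain r where r: "r > 0" "ball 0 r \<subseteq> B" using BC(1,3) open_contains_ball by blast
  define K where "K = (T + 1) / r"
  have "K > 0" using r \<open>0 \<le> T\<close> by (simp add: K_def)
  define U where "U = scl (of_real K) -` C"
  have "open U"
    unfolding U_def using continuous_on_partial_application[OF scl_cont] \<open>open C\<close>
      continuous_on_open_vimage[of UNIV "scl (of_real K)"] by simp
  moreover have "0 \<in> U" using BC(3) by (simp add: U_def)
  moreover have "scl (of_real s) x \<in> W" if "x \<in> U" "0 \<le> s" "s \<le> T" for x s
  proof -
    have "r * s < r * (T + 1)"
      using that r by (intro mult_strict_left_mono) auto
    then have "s / K < r"
      using r \<open>K > 0\<close> by (simp add: K_def field_simps)
    then have "of_real (s / K) \<in> B"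
      using r that \<open>K > 0\<close> by (simp add: subset_iff dist_norm norm_of_real del: of_real_divide)
    moreover have "scl (of_real K) x \<in> C" using \<open>x \<in> U\<close> by (simp add: U_def)
    ultimately have "scl (of_real (s / K)) (scl (of_real K) x) \<in> W"
      using BC(4) by auto
    moreover have "of_real (s / K) * of_real K = (of_real s :: complex)"
      using \<open>K > 0\<close> by (simp del: of_real_divide flip: of_real_mult)
    ultimately show ?thesis by simp
  qed
  ultimately show ?thesis by blast
qed

lemma ennreal_inverse_antimono: "(x::ennreal) \<le> y \<Longrightarrow> inverse y \<le> inverse x"
proof (cases x)
  case (real a)
  assume "x \<le> y"
  show ?thesis
  proof (cases "a = 0")
    case False
    with real \<open>x \<le> y\<close> show ?thesis
      by (cases y) (auto simp: inverse_ennreal le_imp_inverse_le)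
  qed (simp add: real)
qed (simp add: top_unique)

lemma ennreal_ex_inverse_less: "0 < (e::ennreal) \<Longrightarrow> \<exists>T>0. inverse (ennreal T) < e"
proof (cases e)
  case (real r)
  assume "0 < e"
  then have "0 < r" using real by auto
  then show ?thesis
    using real by (intro exI[of _ "2 / r"]) (simp add: inverse_ennreal ennreal_less_iff)
qed (auto intro: exI[of _ 1])

lemma nc_delta_le_inverse:
  assumes "0 \<le> T"
    and "\<And>s. 0 \<le> s \<Longrightarrow> s \<le> T \<Longrightarrow>
           block_ut n m a (\<lambda>i j. scl (of_real s) (b i j)) c \<in> D (n + m)"
  shows "nc_delta scl D n m a c b \<le> inverse (ennreal T)"
  unfolding nc_delta_def
  by (rule ennreal_inverse_antimono, rule Sup_upper) (use assms in \<open>auto simp: ennreal_le_iff\<close>)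

lemma nc_dist_tilde_le_delta_tilde:
  assumes "a \<in> D n" "c \<in> D n"
  shows "nc_dist_tilde scl D n a c \<le> nc_delta_tilde scl D n a c"
proof -
  define x where "x = (\<lambda>j::nat. if j = 0 then a else c)"
  have "nc_delta_tilde scl D n a c = (\<Sum>j\<in>{1..1}. nc_delta_tilde scl D n (x (j - 1)) (x j))"
    by (simp add: x_def)
  then show ?thesis
    unfolding nc_dist_tilde_def
    by (intro Inf_lower CollectI exI[of _ 1] exI[of _ x]) (auto simp: x_def assms)
qed

lemma block_ut_mem_if_entries:
  assumes S: "\<forall>N\<in>mat_carrier (n + m) (n + m). (\<forall>i<n + m. \<forall>j<n + m. N i j \<in> W i j) \<longrightarrow> N \<in> S"
    and "\<forall>i<n. \<forall>j<n. a i j \<in> W i j"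
    and "\<forall>i<n. \<forall>j<m. b i j \<in> W i (n + j)"
    and "\<forall>i<m. \<forall>j<n. 0 \<in> W (n + i) j"
    and "\<forall>i<m. \<forall>j<m. c i j \<in> W (n + i) (n + j)"
  shows "block_ut n m a b c \<in> S"
proof (rule S[rule_format])
  show "block_ut n m a b c \<in> mat_carrier (n + m) (n + m)"
    by (auto simp: mat_carrier_def block_ut_def)
  fix i j assume "i < n + m" "j < n + m"
  then consider "i < n" "j < n" | j' where "i < n" "j = n + j'" "j' < m"
    | i' where "i = n + i'" "i' < m" "j < n" | i' j' where "i = n + i'" "i' < m" "j = n + j'" "j' < m"
    by (metis add_less_cancel_left le_add_diff_inverse not_less)
  then show "block_ut n m a b c i j \<in> W i j"
    by cases (use assms in \<open>auto simp: block_ut_def\<close>)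
qed

lemma block_segment_nbhd:
  fixes scl :: "complex \<Rightarrow> 'v::{ab_group_add, topological_space} \<Rightarrow> 'v"
  assumes vs: "vector_space scl"
    and add_cont: "continuous_on UNIV (\<lambda>(x::'v, y::'v). x + y)"
    and scl_cont: "continuous_on UNIV (\<lambda>(c::complex, x::'v). scl c x)"
    and S_open: "mat_open (n + n) S" and MM: "nc_dsum n n M M \<in> S" and "0 \<le> T"
  shows "\<exists>W. (\<forall>i<n. \<forall>j<n. open (W i j) \<and> M i j \<in> W i j) \<and>
    (\<forall>N\<in>mat_carrier n n. (\<forall>i<n. \<forall>j<n. N i j \<in> W i j) \<longrightarrow>
       (\<forall>s. 0 \<le> s \<longrightarrow> s \<le> T \<longrightarrow> block_ut n n M (\<lambda>i j. scl (of_real s) (M i j - N i j)) N \<in> S))"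
proof -
  obtain W2 where W2: "\<forall>i<n + n. \<forall>j<n + n. open (W2 i j) \<and> nc_dsum n n M M i j \<in> W2 i j"
      "\<forall>N\<in>mat_carrier (n + n) (n + n). (\<forall>i<n + n. \<forall>j<n + n. N i j \<in> W2 i j) \<longrightarrow> N \<in> S"
    using S_open MM unfolding mat_open_def by blast
  have W2_entries: "M i j \<in> W2 i j" "0 \<in> W2 i (n + j)"
      "0 \<in> W2 (n + i) j" "M i j \<in> W2 (n + i) (n + j)" if "i < n" "j < n" for i j
    using that W2(1)[rule_format, of i j] W2(1)[rule_format, of i "n + j"]
      W2(1)[rule_format, of "n + i" j] W2(1)[rule_format, of "n + i" "n + j"]
    by (auto simp: nc_dsum_def block_ut_def)
  have "\<forall>i j. \<exists>U. i < n \<longrightarrow> j < n \<longrightarrow> open U \<and> 0 \<in> U \<and>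
      (\<forall>x\<in>U. \<forall>s. 0 \<le> s \<longrightarrow> s \<le> T \<longrightarrow> scl (of_real s) x \<in> W2 i (n + j))"
    using uniformly_small_scalings[OF vs scl_cont _ _ \<open>0 \<le> T\<close>] W2(1) W2_entries(2) by simp
  then obtain U where U: "\<And>i j. i < n \<Longrightarrow> j < n \<Longrightarrow> open (U i j) \<and> 0 \<in> U i j \<and>
      (\<forall>x\<in>U i j. \<forall>s. 0 \<le> s \<longrightarrow> s \<le> T \<longrightarrow> scl (of_real s) x \<in> W2 i (n + j))"
    by metis
  define W where "W = (\<lambda>i j. W2 (n + i) (n + j) \<inter> {x. M i j - x \<in> U i j})"
  have "open (W i j) \<and> M i j \<in> W i j" if "i < n" "j < n" for i j
    using W2(1) W2_entries(4)[OF that] U[OF that] that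
      open_vimage_diff_left[OF vs add_cont scl_cont, of "U i j" "M i j"]
    by (auto simp: W_def)
  moreover have "block_ut n n M (\<lambda>i j. scl (of_real s) (M i j - N i j)) N \<in> S"
    if "\<forall>i<n. \<forall>j<n. N i j \<in> W i j" "0 \<le> s" "s \<le> T" for N s
    by (rule block_ut_mem_if_entries[OF W2(2)]) (use that U W2_entries in \<open>auto simp: W_def\<close>)
  ultimately show ?thesis by blast
qed

lemma nc_dist_tilde_ball_contains_mat_nbhd:
  fixes scl :: "complex \<Rightarrow> 'v::{ab_group_add, topological_space} \<Rightarrow> 'v"
  assumes vs: "vector_space scl"
    and add_cont: "continuous_on UNIV (\<lambda>(x::'v, y::'v). x + y)"
    and scl_cont: "continuous_on UNIV (\<lambda>(c::complex, x::'v). scl c x)"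
    and ncD: "nc_set D" and D_open: "mat_open (n + n) (D (n + n))"
    and dsum_D: "\<And>a c. a \<in> mat_carrier n n \<Longrightarrow> c \<in> mat_carrier n n \<Longrightarrow>
                   nc_dsum n n a c \<in> D (n + n) \<Longrightarrow> c \<in> D n"
    and MD: "M \<in> D n" and "0 < \<epsilon>"
  obtains W where "\<forall>i<n. \<forall>j<n. open (W i j) \<and> M i j \<in> W i j"
    and "\<forall>N\<in>mat_carrier n n. (\<forall>i<n. \<forall>j<n. N i j \<in> W i j) \<longrightarrow>
       N \<in> D n \<and> nc_dist_tilde scl D n M N < \<epsilon>"
proof -
  obtain T where "T > 0" "inverse (ennreal T) < \<epsilon>"
    using ennreal_ex_inverse_less[OF \<open>0 < \<epsilon>\<close>] by blast
  have "nc_dsum n n M M \<in> D (n + n)" using ncD MD by (simp add: nc_set_def)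
  then obtain W where W: "\<forall>i<n. \<forall>j<n. open (W i j) \<and> M i j \<in> W i j"
    and segment: "\<forall>N\<in>mat_carrier n n. (\<forall>i<n. \<forall>j<n. N i j \<in> W i j) \<longrightarrow>
       (\<forall>s. 0 \<le> s \<longrightarrow> s \<le> T \<longrightarrow> block_ut n n M (\<lambda>i j. scl (of_real s) (M i j - N i j)) N \<in> D (n + n))"
    using block_segment_nbhd[OF vs add_cont scl_cont D_open _ less_imp_le[OF \<open>T > 0\<close>]] by blast
  have near: "N \<in> D n \<and> nc_dist_tilde scl D n M N < \<epsilon>"
    if N: "N \<in> mat_carrier n n" "\<forall>i<n. \<forall>j<n. N i j \<in> W i j" for N
  proof
    have segment_N: "block_ut n n M (\<lambda>i j. scl (of_real s) (M i j - N i j)) N \<in> D (n + n)"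
      if "0 \<le> s" "s \<le> T" for s
      using segment N that by blast
    have "nc_dsum n n M N \<in> D (n + n)"
      using segment_N[of 0] \<open>T > 0\<close>
      by (simp add: nc_dsum_def module.scale_zero_left[OF vs[folded module_iff_vector_space]])
    then show ND: "N \<in> D n"
      using dsum_D MD N(1) ncD by (auto simp: nc_set_def)
    have "nc_dist_tilde scl D n M N \<le> nc_delta_tilde scl D n M N"
      using MD ND by (rule nc_dist_tilde_le_delta_tilde)
    also have "\<dots> \<le> inverse (ennreal T)"
      unfolding nc_delta_tilde_def using \<open>T > 0\<close> segment_N by (intro nc_delta_le_inverse) auto
    also have "\<dots> < \<epsilon>" by fact
    finally show "nc_dist_tilde scl D n M N < \<epsilon>" .
  qed
  show ?thesis by (rule that[OF W]) (use near in blast)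
qed

theorem proposition3p10:
  fixes scl :: "complex \<Rightarrow> 'v::{ab_group_add, topological_space} \<Rightarrow> 'v"
    and D :: "nat \<Rightarrow> 'v ncmat set"
    and n :: nat
    and A :: "'v ncmat set"
  assumes vs: "vector_space scl"
    and add_cont: "continuous_on UNIV (\<lambda>(x::'v, y::'v). x + y)"
    and scl_cont: "continuous_on UNIV (\<lambda>(c::complex, x::'v). scl c x)"
    and ncD: "nc_set D"
    and P1: "\<And>k. mat_open k (D k)"
    and P2: "\<And>k a U. a \<in> D k \<Longrightarrow> unitary_mat k U \<Longrightarrow> unitary_conj scl k U a \<in> D k"
    and P3: "\<And>k m a c. a \<in> mat_carrier k k \<Longrightarrow> c \<in> mat_carrier m m \<Longrightarrow>
               nc_dsum k m a c \<in> D (k + m) \<Longrightarrow> a \<in> D k \<and> c \<in> D m"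
    and A_open: "dtilde_open scl D n A"
  shows "mat_open n A"
  unfolding mat_open_def
proof (intro conjI ballI)
  show "A \<subseteq> mat_carrier n n"
    using A_open ncD unfolding dtilde_open_def nc_set_def by blast
  fix M assume "M \<in> A"
  then obtain \<epsilon> where "0 < \<epsilon>" and ball_A: "{c \<in> D n. nc_dist_tilde scl D n M c < \<epsilon>} \<subseteq> A"
    and "M \<in> D n"
    using A_open unfolding dtilde_open_def by blast
  have "\<And>a c. a \<in> mat_carrier n n \<Longrightarrow> c \<in> mat_carrier n n \<Longrightarrow>
      nc_dsum n n a c \<in> D (n + n) \<Longrightarrow> c \<in> D n"
    using P3 by blast
  then obtain W where W: "\<forall>i<n. \<forall>j<n. open (W i j) \<and> M i j \<in> W i j"
    and near: "\<forall>N\<in>mat_carrier n n. (\<forall>i<n. \<forall>j<n. N i j \<in> W i j) \<longrightarrow>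
      N \<in> D n \<and> nc_dist_tilde scl D n M N < \<epsilon>"
    by (rule nc_dist_tilde_ball_contains_mat_nbhd[OF vs add_cont scl_cont ncD P1 _ \<open>M \<in> D n\<close> \<open>0 < \<epsilon>\<close>])
  show "\<exists>W. (\<forall>i<n. \<forall>j<n. open (W i j) \<and> M i j \<in> W i j) \<and>
      (\<forall>N\<in>mat_carrier n n. (\<forall>i<n. \<forall>j<n. N i j \<in> W i j) \<longrightarrow> N \<in> A)"
    using W near ball_A by (intro exI[of _ W]) auto
qed

end
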